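(* Let $M$ be a unique expansion matroid on a finite set $E$ with $r(M)>0$, and write $F(M)=\{K_1,K_2,\dots,K_t\}$ with the $K_i$ distinct. Then $\mathcal{B}(M)=\{\{b_1,b_2,\dots,b_t\}: b_i\in K_i,\ 1\le i\le t\}$.
   Context: For a matroid $M$: $\mathcal{I}(M)$ its independent sets, $\mathcal{B}(M)$ its bases, $r(M)$ the size of a base, $r(X)$ the rank of $X\subseteq E$. $s(M)=\{A\in\mathcal{I}(M): |A|=r(M)-1\}$; $K_M(X)=\{a\in E: r(X\cup\{a\})=r(X)+1\}$; $F(M)=\{K_M(X): X\in s(M)\}$. $M$ is a unique expansion matroid if for every $B\in\mathcal{B}(M)$ and every $A\in s(M)$, whenever $e_1,e_2\in B$ satisfy $A\cup\{e_1\}\in\mathcal{B}(M)$ and $A\cup\{e_2\}\in\mathcal{B}(M)$, then $e_1=e_2$. *)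

theory Defs
  imports Main
begin

definition matroid :: "'a set \<Rightarrow> 'a set set \<Rightarrow> bool" where
  "matroid E Ind \<longleftrightarrow> finite E \<and> (\<forall>A\<in>Ind. A \<subseteq> E) \<and> {} \<in> Ind
     \<and> (\<forall>A B. B \<in> Ind \<longrightarrow> A \<subseteq> B \<longrightarrow> A \<in> Ind)
     \<and> (\<forall>A B. A \<in> Ind \<longrightarrow> B \<in> Ind \<longrightarrow> card A < card B \<longrightarrow> (\<exists>x\<in>B - A. insert x A \<in> Ind))"

definition bases :: "'a set \<Rightarrow> 'a set set \<Rightarrow> 'a set set" where
  "bases E Ind = {B. B \<in> Ind \<and> (\<forall>C\<in>Ind. B \<subseteq> C \<longrightarrow> C = B)}"

definition rank :: "'a set set \<Rightarrow> 'a set \<Rightarrow> nat" where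
  "rank Ind X = Max {card A | A. A \<in> Ind \<and> A \<subseteq> X}"

definition mrank :: "'a set \<Rightarrow> 'a set set \<Rightarrow> nat" where
  "mrank E Ind = rank Ind E"

definition sM :: "'a set \<Rightarrow> 'a set set \<Rightarrow> 'a set set" where
  "sM E Ind = {A. A \<in> Ind \<and> card A = mrank E Ind - 1}"

definition KM :: "'a set \<Rightarrow> 'a set set \<Rightarrow> 'a set \<Rightarrow> 'a set" where
  "KM E Ind X = {a \<in> E. rank Ind (insert a X) = rank Ind X + 1}"

definition FM :: "'a set \<Rightarrow> 'a set set \<Rightarrow> 'a set set" where
  "FM E Ind = KM E Ind ` sM E Ind"

definition unique_expansion :: "'a set \<Rightarrow> 'a set set \<Rightarrow> bool" where
  "unique_expansion E Ind \<longleftrightarrow> matroid E Ind \<and>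
    (\<forall>B\<in>bases E Ind. \<forall>A\<in>sM E Ind. \<forall>e1\<in>B. \<forall>e2\<in>B.
       insert e1 A \<in> bases E Ind \<longrightarrow> insert e2 A \<in> bases E Ind \<longrightarrow> e1 = e2)"

end

theory Submission
  imports Defs
begin

text \<open>
  For \<open>A \<in> s(M)\<close> the set \<open>K(A)\<close> consists of the elements completing \<open>A\<close> to a base. Unique
  expansion says that no two of them lie in a common base, i.e. they are pairwise parallel;
  hence \<open>K(A)\<close> is the parallel class of any of its elements and the members of \<open>F(M)\<close> are
  pairwise disjoint. Every base \<open>B\<close> meets each \<open>K \<in> F(M)\<close> exactly once and each \<open>b \<in> B\<close> lies in
  \<open>K(B - {b}) \<in> F(M)\<close>, so the bases are transversals of \<open>F(M)\<close>. Conversely, starting from any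
  base and exchanging, one element at a time, the point of \<open>B \<inter> K\<close> for the prescribed
  point of \<open>K\<close> keeps a base, so every transversal is a base.
\<close>

locale indep_matroid =
  fixes E :: "'a set" and Ind :: "'a set set"
  assumes matroid: "matroid E Ind"
begin

lemma finite_ground: "finite E"
  using matroid unfolding matroid_def by blast

lemma indep_subset_ground: "A \<in> Ind \<Longrightarrow> A \<subseteq> E"
  using matroid unfolding matroid_def by blast

lemma finite_indep: "A \<in> Ind \<Longrightarrow> finite A"
  using indep_subset_ground finite_ground finite_subset by blast

lemma empty_indep: "{} \<in> Ind"
  using matroid unfolding matroid_def by blast

lemma indep_subset: "B \<in> Ind \<Longrightarrow> A \<subseteq> B \<Longrightarrow> A \<in> Ind"
  using matroid unfolding matroid_def by blast

lemma indep_augment: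
  "A \<in> Ind \<Longrightarrow> B \<in> Ind \<Longrightarrow> card A < card B \<Longrightarrow> \<exists>x\<in>B - A. insert x A \<in> Ind"
  using matroid unfolding matroid_def by blast

lemma indep_augment_to_card:
  "I \<in> Ind \<Longrightarrow> J \<in> Ind \<Longrightarrow> card I \<le> card J \<Longrightarrow>
    \<exists>C\<in>Ind. I \<subseteq> C \<and> C \<subseteq> I \<union> J \<and> card C = card J"
proof (induction "card J - card I" arbitrary: I)
  case 0
  then show ?case by auto
next
  case (Suc n)
  then have "card I < card J" by linarith
  then obtain x where x: "x \<in> J - I" "insert x I \<in> Ind"
    using indep_augment[OF Suc.prems(1,2)] by blast
  have "card (insert x I) = card I + 1"
    using x finite_indep[OF Suc.prems(1)] by simp
  then obtain C where "C \<in> Ind" "insert x I \<subseteq> C" "C \<subseteq> insert x I \<union> J" "card C = card J"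
    using Suc.hyps(1)[of "insert x I"] Suc.hyps(2) Suc.prems(2) x(2) by fastforce
  then show ?case using x by blast
qed

lemma finite_rank_values: "finite {card A | A. A \<in> Ind \<and> A \<subseteq> X}"
  by (rule finite_subset[of _ "{..card E}"])
     (use indep_subset_ground finite_ground card_mono in fastforce)+

lemma card_le_rank: "A \<in> Ind \<Longrightarrow> A \<subseteq> X \<Longrightarrow> card A \<le> rank Ind X"
  unfolding rank_def by (rule Max_ge[OF finite_rank_values]) blast

lemma obtain_indep_of_rank:
  obtains A where "A \<in> Ind" "A \<subseteq> X" "card A = rank Ind X"
proof -
  have "rank Ind X \<in> {card A | A. A \<in> Ind \<and> A \<subseteq> X}"
    unfolding rank_def by (rule Max_in[OF finite_rank_values]) (use empty_indep in blast)
  then show ?thesis using that by auto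
qed

lemma rank_indep: "A \<in> Ind \<Longrightarrow> rank Ind A = card A"
  by (metis card_le_rank card_mono finite_indep obtain_indep_of_rank le_antisym order_refl)

lemma card_indep_le_mrank: "A \<in> Ind \<Longrightarrow> card A \<le> mrank E Ind"
  unfolding mrank_def by (rule card_le_rank[OF _ indep_subset_ground])

lemma bases_iff: "B \<in> bases E Ind \<longleftrightarrow> B \<in> Ind \<and> card B = mrank E Ind"
proof
  assume B: "B \<in> bases E Ind"
  then have "B \<in> Ind" unfolding bases_def by blast
  moreover obtain J where "J \<in> Ind" "card J = mrank E Ind"
    unfolding mrank_def by (rule obtain_indep_of_rank)
  ultimately show "B \<in> Ind \<and> card B = mrank E Ind"
    using B indep_augment[of B J] card_indep_le_mrank[of B] unfolding bases_def by fastforce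
next
  assume B: "B \<in> Ind \<and> card B = mrank E Ind"
  have "C = B" if "C \<in> Ind" "B \<subseteq> C" for C
    using that B card_indep_le_mrank[of C] card_mono[OF finite_indep, of C B]
    by (metis card_subset_eq finite_indep le_antisym)
  then show "B \<in> bases E Ind" using B unfolding bases_def by blast
qed

lemma indep_extends_to_base: "I \<in> Ind \<Longrightarrow> \<exists>B\<in>bases E Ind. I \<subseteq> B"
proof -
  assume I: "I \<in> Ind"
  obtain J where J: "J \<in> Ind" "card J = mrank E Ind"
    unfolding mrank_def by (rule obtain_indep_of_rank)
  then show ?thesis
    using indep_augment_to_card[OF I J(1)] card_indep_le_mrank[OF I] bases_iff by auto
qed

lemma KM_indep: "A \<in> Ind \<Longrightarrow> KM E Ind A = {a \<in> E. a \<notin> A \<and> insert a A \<in> Ind}"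
proof -
  assume A: "A \<in> Ind"
  have "rank Ind (insert a A) = card A + 1 \<longleftrightarrow> a \<notin> A \<and> insert a A \<in> Ind" for a
  proof
    assume rk: "rank Ind (insert a A) = card A + 1"
    obtain C where C: "C \<in> Ind" "C \<subseteq> insert a A" "card C = card A + 1"
      using obtain_indep_of_rank[of "insert a A"] rk by metis
    have fin: "finite (insert a A)" using finite_indep[OF A] by simp
    have "card C \<le> card (insert a A)" using card_mono[OF fin C(2)] .
    then have a: "a \<notin> A" using C(3) insert_absorb[of a A] by fastforce
    then have "card (insert a A) = card C" using C(3) finite_indep[OF A] by simp
    then have "C = insert a A" using card_subset_eq[OF fin C(2)] by simp
    then show "a \<notin> A \<and> insert a A \<in> Ind" using a C(1) by blast
  next
    assume "a \<notin> A \<and> insert a A \<in> Ind"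
    then show "rank Ind (insert a A) = card A + 1"
      using rank_indep finite_indep[OF A] by simp
  qed
  then show ?thesis unfolding KM_def rank_indep[OF A] by blast
qed

lemma sM_indep: "A \<in> sM E Ind \<Longrightarrow> A \<in> Ind"
  unfolding sM_def by blast

lemma insert_KM_in_bases: "A \<in> sM E Ind \<Longrightarrow> x \<in> KM E Ind A \<Longrightarrow> insert x A \<in> bases E Ind"
  using card_indep_le_mrank[of "insert x A"]
  by (auto simp: KM_indep[OF sM_indep] bases_iff sM_def finite_indep)

lemma base_remove_in_sM:
  assumes "B \<in> bases E Ind" "b \<in> B"
  shows "B - {b} \<in> sM E Ind" "b \<in> KM E Ind (B - {b})"
proof -
  have B: "B \<in> Ind" "card B = mrank E Ind" using assms(1) bases_iff by auto
  then show s: "B - {b} \<in> sM E Ind"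
    using assms(2) indep_subset[OF B(1)] finite_indep unfolding sM_def by auto
  show "b \<in> KM E Ind (B - {b})"
    using assms(2) B(1) indep_subset_ground[OF B(1)]
    by (auto simp: KM_indep[OF sM_indep[OF s]] insert_absorb)
qed

lemma KM_meets_base:
  assumes "mrank E Ind > 0" "A \<in> sM E Ind" "B \<in> bases E Ind"
  shows "\<exists>x\<in>B. x \<in> KM E Ind A"
proof -
  have "card A < card B" using assms unfolding sM_def bases_iff by auto
  then obtain x where "x \<in> B - A" "insert x A \<in> Ind"
    using indep_augment sM_indep[OF assms(2)] assms(3) bases_iff by blast
  then show ?thesis
    using assms(3) indep_subset_ground bases_iff by (auto simp: KM_indep[OF sM_indep[OF assms(2)]])
qed

lemma FM_meets_base:
  "mrank E Ind > 0 \<Longrightarrow> K \<in> FM E Ind \<Longrightarrow> B \<in> bases E Ind \<Longrightarrow> \<exists>x\<in>B. x \<in> K"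
  unfolding FM_def using KM_meets_base by blast

lemma finite_FM: "finite (FM E Ind)"
  by (rule finite_subset[of _ "Pow E"]) (auto simp: FM_def KM_def finite_ground)

end

definition (in indep_matroid) parallel_class :: "'a \<Rightarrow> 'a set" where
  "parallel_class x = {y \<in> E. {y} \<in> Ind \<and> (y = x \<or> {x, y} \<notin> Ind)}"

locale unique_expansion_matroid = indep_matroid +
  assumes unique_expansion: "unique_expansion E Ind"
begin

lemma KM_inter_base_unique:
  "A \<in> sM E Ind \<Longrightarrow> B \<in> bases E Ind \<Longrightarrow> x \<in> B \<Longrightarrow> y \<in> B \<Longrightarrow>
    x \<in> KM E Ind A \<Longrightarrow> y \<in> KM E Ind A \<Longrightarrow> x = y"
  using unique_expansion insert_KM_in_bases unfolding unique_expansion_def by metis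

lemma KM_pair_dependent:
  "A \<in> sM E Ind \<Longrightarrow> x \<in> KM E Ind A \<Longrightarrow> y \<in> KM E Ind A \<Longrightarrow> x \<noteq> y \<Longrightarrow> {x, y} \<notin> Ind"
  using KM_inter_base_unique indep_extends_to_base by (metis insert_subset)

lemma KM_eq_parallel_class:
  assumes A: "A \<in> sM E Ind" and x: "x \<in> KM E Ind A"
  shows "KM E Ind A = parallel_class x"
proof
  show "KM E Ind A \<subseteq> parallel_class x"
    using KM_pair_dependent[OF A x] indep_subset
    by (auto simp: KM_indep[OF sM_indep[OF A]] parallel_class_def)
next
  show "parallel_class x \<subseteq> KM E Ind A"
  proof
    fix y assume y: "y \<in> parallel_class x"
    show "y \<in> KM E Ind A"
    proof (cases "y = x")
      case True
      then show ?thesis using x by simp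
    next
      case False
      then have y_indep: "{y} \<in> Ind" and xy: "{x, y} \<notin> Ind" and "y \<in> E"
        using y unfolding parallel_class_def by auto
      have xA: "insert x A \<in> Ind" "x \<notin> A" and fin: "finite A"
        using x A finite_indep sM_indep by (auto simp: KM_indep[OF sM_indep[OF A]])
      have "y \<notin> A"
      proof
        assume "y \<in> A"
        then have "{x, y} \<subseteq> insert x A" by blast
        with xy show False using indep_subset[OF xA(1)] by blast
      qed
      obtain C where C: "C \<in> Ind" "y \<in> C" "C \<subseteq> insert x (insert y A)" "card C = card A + 1"
      proof -
        have "card {y} \<le> card (insert x A)" using xA(2) fin by simp
        then obtain C where "C \<in> Ind" "{y} \<subseteq> C" "C \<subseteq> {y} \<union> insert x A"
          "card C = card (insert x A)"
          using indep_augment_to_card[OF y_indep xA(1)] by blast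
        then show ?thesis using that xA(2) fin by simp
      qed
      have "x \<notin> C"
      proof
        assume "x \<in> C"
        then have "{x, y} \<subseteq> C" using C(2) by blast
        with xy show False using indep_subset[OF C(1)] by blast
      qed
      then have "C \<subseteq> insert y A" using C(3) by blast
      moreover have "card (insert y A) = card C" using C(4) \<open>y \<notin> A\<close> fin by simp
      ultimately have "C = insert y A" using card_subset_eq[of "insert y A" C] fin by simp
      then show ?thesis
        using C(1) \<open>y \<notin> A\<close> \<open>y \<in> E\<close> by (simp add: KM_indep[OF sM_indep[OF A]])
    qed
  qed
qed

lemma FM_disjoint: "K \<in> FM E Ind \<Longrightarrow> K' \<in> FM E Ind \<Longrightarrow> x \<in> K \<Longrightarrow> x \<in> K' \<Longrightarrow> K = K'"
  unfolding FM_def using KM_eq_parallel_class by blast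

lemma FM_inter_base_unique:
  "K \<in> FM E Ind \<Longrightarrow> B \<in> bases E Ind \<Longrightarrow> x \<in> B \<Longrightarrow> y \<in> B \<Longrightarrow> x \<in> K \<Longrightarrow> y \<in> K \<Longrightarrow> x = y"
  unfolding FM_def using KM_inter_base_unique by blast

lemma base_eq_transversal_image:
  assumes B: "B \<in> bases E Ind" and f: "\<forall>K\<in>FM E Ind. f K \<in> K \<and> f K \<in> B"
  shows "B = f ` FM E Ind"
proof -
  have "b \<in> f ` FM E Ind" if b: "b \<in> B" for b
  proof -
    have K: "KM E Ind (B - {b}) \<in> FM E Ind" "b \<in> KM E Ind (B - {b})"
      using base_remove_in_sM[OF B b] unfolding FM_def by auto
    then have "f (KM E Ind (B - {b})) = b"
      using FM_inter_base_unique[OF K(1) B] f b by blast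
    then show ?thesis using K(1) by force
  qed
  then show ?thesis using f by blast
qed

lemma exchange_in_FM:
  assumes B: "B \<in> bases E Ind" "b \<in> B" and K: "K \<in> FM E Ind" "b \<in> K" and "x \<in> K"
  shows "insert x (B - {b}) \<in> bases E Ind"
proof -
  have "KM E Ind (B - {b}) \<in> FM E Ind" "b \<in> KM E Ind (B - {b})"
    using base_remove_in_sM[OF B] unfolding FM_def by auto
  then have "KM E Ind (B - {b}) = K" using FM_disjoint K by blast
  then show ?thesis using insert_KM_in_bases base_remove_in_sM(1)[OF B] \<open>x \<in> K\<close> by blast
qed

lemma transversal_image_subset_base:
  assumes r: "mrank E Ind > 0" and f: "\<forall>K\<in>FM E Ind. f K \<in> K"
  shows "finite T \<Longrightarrow> T \<subseteq> FM E Ind \<Longrightarrow> \<exists>B\<in>bases E Ind. f ` T \<subseteq> B"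
proof (induction T rule: finite_induct)
  case empty
  then show ?case using indep_extends_to_base empty_indep by blast
next
  case (insert K T)
  then have K: "K \<in> FM E Ind" and T: "T \<subseteq> FM E Ind" by simp_all
  obtain B where B: "B \<in> bases E Ind" "f ` T \<subseteq> B" using insert.IH[OF T] by blast
  obtain b where b: "b \<in> B" "b \<in> K" using FM_meets_base[OF r K B(1)] by blast
  have "f K' \<noteq> b" if K': "K' \<in> T" for K'
  proof
    assume "f K' = b"
    then have "b \<in> K'" using f T K' by blast
    then have "K' = K" using FM_disjoint[OF _ K _ b(2)] T K' by blast
    then show False using insert.hyps(2) K' by blast
  qed
  then have "f ` T \<subseteq> B - {b}" using B(2) by blast
  moreover have "insert (f K) (B - {b}) \<in> bases E Ind"
    using exchange_in_FM[OF B(1) b(1) K b(2)] f K by blast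
  ultimately show ?case by (intro bexI[of _ "insert (f K) (B - {b})"]) auto
qed

end

theorem proposition8:
  fixes E :: "'a set" and Ind :: "'a set set"
  assumes "unique_expansion E Ind"
    and "mrank E Ind > 0"
  shows "bases E Ind = {f ` FM E Ind | f. \<forall>K\<in>FM E Ind. f K \<in> K}"
proof -
  interpret unique_expansion_matroid E Ind
    using assms(1) by unfold_locales (simp_all add: unique_expansion_def)
  show ?thesis
  proof (intro set_eqI iffI)
    fix B assume B: "B \<in> bases E Ind"
    define f where "f K = (SOME e. e \<in> B \<and> e \<in> K)" for K
    have "\<forall>K\<in>FM E Ind. f K \<in> K \<and> f K \<in> B"
      unfolding f_def using FM_meets_base[OF assms(2) _ B] by (metis (mono_tags, lifting) someI_ex)
    then show "B \<in> {f ` FM E Ind | f. \<forall>K\<in>FM E Ind. f K \<in> K}"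
      using base_eq_transversal_image[OF B] by blast
  next
    fix X assume "X \<in> {f ` FM E Ind | f. \<forall>K\<in>FM E Ind. f K \<in> K}"
    then obtain f where X: "X = f ` FM E Ind" and f: "\<forall>K\<in>FM E Ind. f K \<in> K" by blast
    obtain B where "B \<in> bases E Ind" "f ` FM E Ind \<subseteq> B"
      using transversal_image_subset_base[OF assms(2) f finite_FM] by blast
    then show "X \<in> bases E Ind" using base_eq_transversal_image f X by blast
  qed
qed

end
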